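(* For any valid scheme (satisfying (C1)–(C8)) with $N\ge1$, $K\ge2$, \[ \frac{N-1}{N}\,d+\rho_U\ \ge\ 1, \] equivalently $NL\le (N-1)D+N\,H(\mathcal{R}_U)$.
   Context: Model (SPIR with user-side common randomness). There are $N\ge1$ non-colluding databases, each storing the same $K\ge2$ messages $W_1,\dots,W_K$. Each message consists of $L$ i.i.d. symbols uniform over a sufficiently large finite field $\mathbb{F}_q$; entropies are in $q$-ary units, so $H(W_k)=L$ and $H(W_{1:K})=KL$. The databases share server-side common randomness $\mathcal{R}_S$, unknown to the user. The user holds user-side common randomness $\mathcal{R}_U$, a subset of the components of $\mathcal{R}_S$, unknown to the databases except for its size (uniform over subsets of given cardinality). $\mathcal{F}$ is the user's retrieval-strategy randomness. To retrieve $W_k$ the user sends $Q_n^{[k,\mathcal{R}_U]}$ to database $n$, receiving $A_n^{[k,\mathcal{R}_U]}$; $W_{\bar k}=\{W_j:j\ne k\}$. A valid scheme satisfies for all $k,n,\mathcal{R}_U$: (C1) $I(W_{1:K};k,\mathcal{F},\mathcal{R}_S,\mathcal{R}_U)=0$; (C2) $I(Q_{1:N}^{[k,\mathcal{R}_U]};W_{1:K},\mathcal{R}_S\setminus\mathcal{R}_U)=0$; (C3) $H(Q_{1:N}^{[k,\mathcal{R}_U]}\mid\mathcal{F})=0$; (C4) $H(A_n^{[k,\mathcal{R}_U]}\mid Q_n^{[k,\mathcal{R}_U]},W_{1:K},\mathcal{R}_S)=0$; (C5) $H(W_k\mid\mathcal{F},A_{1:N}^{[k,\mathcal{R}_U]},\mathcal{R}_U)=0$;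 (C6) user privacy: for all $k,k',n,\mathcal{R}_U$ there is $\mathcal{R}_U'$ with $H(\mathcal{R}_U')=H(\mathcal{R}_U)$ and $(Q_n^{[k,\mathcal{R}_U]},A_n^{[k,\mathcal{R}_U]},W_{1:K},\mathcal{R}_S)\sim(Q_n^{[k',\mathcal{R}_U']},A_n^{[k',\mathcal{R}_U']},W_{1:K},\mathcal{R}_S)$; (C7) $I(W_{\bar k};\mathcal{F},A_{1:N}^{[k,\mathcal{R}_U]},\mathcal{R}_U)=0$; (C8) $I(\mathcal{R}_S\setminus\mathcal{R}_U;\mathcal{F},A_{1:N}^{[k,\mathcal{R}_U]},W_k,\mathcal{R}_U)=0$. $D$ is the maximal total number of downloaded symbols; $d=D/L$, $\rho_U=H(\mathcal{R}_U)/L$. *)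

theory Defs
  imports "HOL-Probability.Probability_Mass_Function" "HOL-Library.FuncSet"
begin

definition ent :: "real \<Rightarrow> 'w pmf \<Rightarrow> ('w \<Rightarrow> 'a) \<Rightarrow> real" where
  "ent b M X = - (\<Sum>x\<in>set_pmf (map_pmf X M).
       pmf (map_pmf X M) x * log b (pmf (map_pmf X M) x))"

definition cond_ent :: "real \<Rightarrow> 'w pmf \<Rightarrow> ('w \<Rightarrow> 'a) \<Rightarrow> ('w \<Rightarrow> 'b) \<Rightarrow> real" where
  "cond_ent b M X Y = ent b M (\<lambda>\<omega>. (X \<omega>, Y \<omega>)) - ent b M Y"

definition mut_inf :: "real \<Rightarrow> 'w pmf \<Rightarrow> ('w \<Rightarrow> 'a) \<Rightarrow> ('w \<Rightarrow> 'b) \<Rightarrow> real" where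
  "mut_inf b M X Y = ent b M X + ent b M Y - ent b M (\<lambda>\<omega>. (X \<omega>, Y \<omega>))"

text \<open>Collections of random variables.  Messages are indexed by 1..K,
  databases by 1..N, components of the server-side randomness by the finite set Cc.\<close>

definition W_all :: "nat \<Rightarrow> (nat \<Rightarrow> 'w \<Rightarrow> 'm) \<Rightarrow> 'w \<Rightarrow> nat \<Rightarrow> 'm" where
  "W_all K W = (\<lambda>\<omega>. (\<lambda>j\<in>{1..K}. W j \<omega>))"

definition W_bar :: "nat \<Rightarrow> (nat \<Rightarrow> 'w \<Rightarrow> 'm) \<Rightarrow> nat \<Rightarrow> 'w \<Rightarrow> nat \<Rightarrow> 'm" where
  "W_bar K W k = (\<lambda>\<omega>. (\<lambda>j\<in>{1..K} - {k}. W j \<omega>))"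

text \<open>The components of the server-side randomness indexed by S.
  R_S is rand_part RS Cc, R_U is rand_part RS S, R_S minus R_U is rand_part RS (Cc - S).\<close>
definition rand_part :: "('w \<Rightarrow> 'c \<Rightarrow> 'r) \<Rightarrow> 'c set \<Rightarrow> 'w \<Rightarrow> 'c \<Rightarrow> 'r" where
  "rand_part RS S = (\<lambda>\<omega>. restrict (RS \<omega>) S)"

definition all_db :: "nat \<Rightarrow> (nat \<Rightarrow> 'w \<Rightarrow> 'a) \<Rightarrow> 'w \<Rightarrow> nat \<Rightarrow> 'a" where
  "all_db N X = (\<lambda>\<omega>. (\<lambda>n\<in>{1..N}. X n \<omega>))"

definition admissible :: "'c set \<Rightarrow> nat \<Rightarrow> 'c set \<Rightarrow> bool" where
  "admissible Cc m S \<longleftrightarrow> S \<subseteq> Cc \<and> card S = m"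

text \<open>Q k S n and A k S n are the query to /
  answer of database n when the user wants W_k and holds user-side randomness
  indexed by S (an admissible subset of components).\<close>
definition valid_scheme ::
  "real \<Rightarrow> 'w pmf \<Rightarrow> nat \<Rightarrow> nat \<Rightarrow> (nat \<Rightarrow> 'w \<Rightarrow> 'm) \<Rightarrow> ('w \<Rightarrow> 'c \<Rightarrow> 'r) \<Rightarrow> 'c set \<Rightarrow> nat
   \<Rightarrow> ('w \<Rightarrow> 'f) \<Rightarrow> (nat \<Rightarrow> 'c set \<Rightarrow> nat \<Rightarrow> 'w \<Rightarrow> 'qu) \<Rightarrow> (nat \<Rightarrow> 'c set \<Rightarrow> nat \<Rightarrow> 'w \<Rightarrow> 'an) \<Rightarrow> bool"
where
  "valid_scheme b M N K W RS Cc m F Q A \<longleftrightarrow>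
    (\<forall>k\<in>{1..K}. \<forall>S. admissible Cc m S \<longrightarrow>
       \<comment> \<open>(C1)\<close>
       mut_inf b M (W_all K W) (\<lambda>\<omega>. (F \<omega>, rand_part RS Cc \<omega>, rand_part RS S \<omega>)) = 0 \<and>
       \<comment> \<open>(C2)\<close>
       mut_inf b M (all_db N (Q k S)) (\<lambda>\<omega>. (W_all K W \<omega>, rand_part RS (Cc - S) \<omega>)) = 0 \<and>
       \<comment> \<open>(C3)\<close>
       cond_ent b M (all_db N (Q k S)) F = 0 \<and>
       \<comment> \<open>(C4)\<close>
       (\<forall>n\<in>{1..N}. cond_ent b M (A k S n)
          (\<lambda>\<omega>. (Q k S n \<omega>, W_all K W \<omega>, rand_part RS Cc \<omega>)) = 0) \<and>
       \<comment> \<open>(C5)\<close>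
       cond_ent b M (W k) (\<lambda>\<omega>. (F \<omega>, all_db N (A k S) \<omega>, rand_part RS S \<omega>)) = 0 \<and>
       \<comment> \<open>(C6)\<close>
       (\<forall>k'\<in>{1..K}. \<forall>n\<in>{1..N}. \<exists>S'. admissible Cc m S' \<and>
          ent b M (rand_part RS S') = ent b M (rand_part RS S) \<and>
          map_pmf (\<lambda>\<omega>. (Q k S n \<omega>, A k S n \<omega>, W_all K W \<omega>, rand_part RS Cc \<omega>)) M =
          map_pmf (\<lambda>\<omega>. (Q k' S' n \<omega>, A k' S' n \<omega>, W_all K W \<omega>, rand_part RS Cc \<omega>)) M) \<and>
       \<comment> \<open>(C7)\<close>
       mut_inf b M (W_bar K W k) (\<lambda>\<omega>. (F \<omega>, all_db N (A k S) \<omega>, rand_part RS S \<omega>)) = 0 \<and>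
       \<comment> \<open>(C8)\<close>
       mut_inf b M (rand_part RS (Cc - S))
          (\<lambda>\<omega>. (F \<omega>, all_db N (A k S) \<omega>, W k \<omega>, rand_part RS S \<omega>)) = 0)"

end

theory Submission
  imports Defs "HOL-Probability.Probability"
begin

text \<open>Fix the desired message W_k, the user-side randomness U and one database n. By user
  privacy, the query and answer of database n alone reveal nothing about W_k. Conditioning in
  addition on U lowers the uncertainty of W_k by at most H(U), and conditioning further on the
  retrieval strategy F lowers it not at all, because the answer is computed from the messages
  and the server randomness, which are jointly independent of (F, U). By decodability, what is
  left of H(W_k) = L must then be supplied by the answers of the other N - 1 databases, given
  all queries, and their entropy is at most their length. Summing
  L \<le> H(U) + E[sum of the other answer lengths] over n gives N L \<le> N H(U) + (N - 1) D.\<close>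

section \<open>Entropy on finite probability spaces\<close>

definition prob_atom :: "'w pmf \<Rightarrow> ('w \<Rightarrow> 'a) \<Rightarrow> 'w \<Rightarrow> real" where
  "prob_atom M X \<omega> = measure_pmf.prob M {\<omega>'. X \<omega>' = X \<omega>}"

definition determines :: "'w pmf \<Rightarrow> ('w \<Rightarrow> 'a) \<Rightarrow> ('w \<Rightarrow> 'b) \<Rightarrow> bool" where
  "determines M Y X \<longleftrightarrow> (\<forall>\<omega>\<in>set_pmf M. \<forall>\<omega>'\<in>set_pmf M. Y \<omega> = Y \<omega>' \<longrightarrow> X \<omega> = X \<omega>')"

lemma determinesI:
  "(\<And>\<omega> \<omega>'. \<omega> \<in> set_pmf M \<Longrightarrow> \<omega>' \<in> set_pmf M \<Longrightarrow> Y \<omega> = Y \<omega>' \<Longrightarrow> X \<omega> = X \<omega>') \<Longrightarrow> determines M Y X"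
  unfolding determines_def by blast

lemma determinesD:
  "determines M Y X \<Longrightarrow> \<omega> \<in> set_pmf M \<Longrightarrow> \<omega>' \<in> set_pmf M \<Longrightarrow> Y \<omega> = Y \<omega>' \<Longrightarrow> X \<omega> = X \<omega>'"
  unfolding determines_def by blast

lemma determines_refl: "determines M X X"
  by (simp add: determines_def)

lemma determines_trans:
  assumes "determines M X Y" "determines M Y Z" shows "determines M X Z"
  by (rule determinesI) (rule determinesD[OF assms(2)], assumption+, rule determinesD[OF assms(1)])

lemma determines_pair:
  assumes "determines M X Y" "determines M X Z"
  shows "determines M X (\<lambda>\<omega>. (Y \<omega>, Z \<omega>))"
  using determinesD[OF assms(1)] determinesD[OF assms(2)] by (intro determinesI) blast

lemma restrict_eq_iff: "restrict f A = restrict g A \<longleftrightarrow> (\<forall>x\<in>A. f x = g x)"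
  by (auto simp: fun_eq_iff restrict_def)

lemma sum_pmf_group_by_value:
  assumes fin: "finite (set_pmf M)"
  shows "(\<Sum>t\<in>T ` set_pmf M. measure_pmf.prob M (T -` {t}) * g t)
       = (\<Sum>\<omega>\<in>set_pmf M. pmf M \<omega> * g (T \<omega>))"
proof -
  have prob_fibre: "measure_pmf.prob M (T -` {t}) = (\<Sum>\<omega>\<in>{\<omega>\<in>set_pmf M. T \<omega> = t}. pmf M \<omega>)" for t
  proof -
    have "{\<omega>\<in>set_pmf M. T \<omega> = t} = set_pmf M \<inter> T -` {t}" by auto
    then have "measure_pmf.prob M (T -` {t}) = measure_pmf.prob M {\<omega>\<in>set_pmf M. T \<omega> = t}"
      using measure_Int_set_pmf[of M "T -` {t}"] by (simp add: Int_commute)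
    then show ?thesis using fin by (simp add: measure_measure_pmf_finite)
  qed
  have "(\<Sum>\<omega>\<in>set_pmf M. pmf M \<omega> * g (T \<omega>))
     = (\<Sum>t\<in>T ` set_pmf M. \<Sum>\<omega>\<in>{\<omega>\<in>set_pmf M. T \<omega> = t}. pmf M \<omega> * g (T \<omega>))"
    by (rule sum.group[symmetric]) (use fin in auto)
  also have "\<dots> = (\<Sum>t\<in>T ` set_pmf M. measure_pmf.prob M (T -` {t}) * g t)"
    by (auto intro!: sum.cong simp: sum_distrib_right prob_fibre)
  finally show ?thesis by simp
qed

lemma ent_eq_sum_prob_atom:
  assumes "finite (set_pmf M)"
  shows "ent b M X = - (\<Sum>\<omega>\<in>set_pmf M. pmf M \<omega> * log b (prob_atom M X \<omega>))"
  unfolding ent_def prob_atom_def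
  using sum_pmf_group_by_value[OF assms, of X "\<lambda>x. log b (measure_pmf.prob M (X -` {x}))"]
  by (simp add: pmf_map vimage_def)

lemma prob_atom_pos: "\<omega> \<in> set_pmf M \<Longrightarrow> prob_atom M X \<omega> > 0"
  unfolding prob_atom_def by (rule measure_pmf_posI) auto

lemma ent_const: "finite (set_pmf M) \<Longrightarrow> ent b M (\<lambda>\<omega>. c) = 0"
  by (simp add: ent_eq_sum_prob_atom prob_atom_def)

lemma ent_cong:
  assumes fin: "finite (set_pmf M)" and "determines M X Y" "determines M Y X"
  shows "ent b M X = ent b M Y"
proof -
  have "prob_atom M X \<omega> = prob_atom M Y \<omega>" if "\<omega> \<in> set_pmf M" for \<omega>
  proof -
    have "{\<omega>'. X \<omega>' = X \<omega>} \<inter> set_pmf M = {\<omega>'. Y \<omega>' = Y \<omega>} \<inter> set_pmf M"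
      using assms(2,3) that unfolding determines_def by blast
    then show ?thesis unfolding prob_atom_def by (metis measure_Int_set_pmf)
  qed
  then show ?thesis unfolding ent_eq_sum_prob_atom[OF fin] by (auto intro!: sum.cong)
qed

lemma ent_map_pmf_cong:
  assumes "map_pmf T M = map_pmf T' M"
  shows "ent b M (\<lambda>\<omega>. g (T \<omega>)) = ent b M (\<lambda>\<omega>. g (T' \<omega>))"
proof -
  have "map_pmf (\<lambda>\<omega>. g (T \<omega>)) M = map_pmf (\<lambda>\<omega>. g (T' \<omega>)) M"
    using assms by (metis (no_types) map_pmf_comp)
  then show ?thesis unfolding ent_def by simp
qed

text \<open>Restricting to the support makes every random variable a simple function, so that the
  information theory of HOL-Probability applies.\<close>

definition support_measure :: "'w pmf \<Rightarrow> 'w measure" where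
  "support_measure M = restrict_space (measure_pmf M) (set_pmf M)"

lemma space_support_measure [simp]: "space (support_measure M) = set_pmf M"
  by (simp add: support_measure_def space_restrict_space)

lemma sets_support_measure [simp]: "sets (support_measure M) = Pow (set_pmf M)"
  by (auto simp: support_measure_def sets_restrict_space)

lemma information_space_support_measure:
  assumes "b > 1"
  shows "information_space (support_measure M) b"
proof -
  have "prob_space (support_measure M)" unfolding support_measure_def
    by (rule prob_space_restrict_space) (auto simp: emeasure_pmf)
  then show ?thesis using assms by (simp add: information_space_def information_space_axioms_def)
qed

lemma simple_function_support_measure:
  "finite (set_pmf M) \<Longrightarrow> simple_function (support_measure M) X"
  by (auto simp: simple_function_def)

lemma simple_distributed_support_measure:
  assumes "finite (set_pmf M)"
  shows "simple_distributed (support_measure M) X (\<lambda>x. measure_pmf.prob M (X -` {x}))"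
proof (rule prob_space.simple_distributedI)
  show "prob_space (support_measure M)"
    using information_space_support_measure[of 2] information_space.axioms(1) by fastforce
  show "simple_function (support_measure M) X" using assms by (rule simple_function_support_measure)
  show "measure_pmf.prob M (X -` {x}) = measure (support_measure M) (X -` {x} \<inter> space (support_measure M))" for x
    by (simp add: support_measure_def measure_restrict_space measure_Int_set_pmf)
qed simp_all

lemma ent_submodular:
  assumes fin: "finite (set_pmf M)" and b: "b > 1"
  shows "ent b M (\<lambda>\<omega>. (X \<omega>, Y \<omega>, Z \<omega>)) + ent b M Z
    \<le> ent b M (\<lambda>\<omega>. (X \<omega>, Z \<omega>)) + ent b M (\<lambda>\<omega>. (Y \<omega>, Z \<omega>))"
proof -
  interpret information_space "support_measure M" b
    using information_space_support_measure[OF b] .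
  let ?XYZ = "\<lambda>\<omega>. (X \<omega>, Y \<omega>, Z \<omega>)" and ?XZ = "\<lambda>\<omega>. (X \<omega>, Z \<omega>)" and ?YZ = "\<lambda>\<omega>. (Y \<omega>, Z \<omega>)"
  let ?P = "\<lambda>V v. measure_pmf.prob M (V -` {v})"
  let ?cmi = "conditional_mutual_information b (count_space (X ` set_pmf M))
    (count_space (Y ` set_pmf M)) (count_space (Z ` set_pmf M)) X Y Z"
  have "0 \<le> ?cmi"
    using conditional_mutual_information_nonneg[of X Y Z] fin
    by (simp add: simple_function_support_measure)
  also have "?cmi = (\<Sum>(x, y, z)\<in>?XYZ ` set_pmf M.
      ?P ?XYZ (x, y, z) * log b (?P ?XYZ (x, y, z) / (?P ?XZ (x, z) * (?P ?YZ (y, z) / ?P Z z))))"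
    using conditional_mutual_information_eq[OF simple_distributed_support_measure[OF fin]
        simple_distributed_support_measure[OF fin] simple_distributed_support_measure[OF fin]
        simple_distributed_support_measure[OF fin]]
    by simp
  also have "\<dots> = (\<Sum>t\<in>?XYZ ` set_pmf M. ?P ?XYZ t *
      (\<lambda>(x, y, z). log b (?P ?XYZ (x, y, z) / (?P ?XZ (x, z) * (?P ?YZ (y, z) / ?P Z z)))) t)"
    by (auto intro!: sum.cong)
  also have "\<dots> = (\<Sum>\<omega>\<in>set_pmf M. pmf M \<omega> * log b (prob_atom M ?XYZ \<omega> /
      (prob_atom M ?XZ \<omega> * (prob_atom M ?YZ \<omega> / prob_atom M Z \<omega>))))"
    by (subst sum_pmf_group_by_value[OF fin]) (simp add: prob_atom_def vimage_def)
  also have "\<dots> = (\<Sum>\<omega>\<in>set_pmf M. pmf M \<omega> * log b (prob_atom M ?XYZ \<omega>)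
      + pmf M \<omega> * log b (prob_atom M Z \<omega>) - pmf M \<omega> * log b (prob_atom M ?XZ \<omega>)
      - pmf M \<omega> * log b (prob_atom M ?YZ \<omega>))"
  proof (intro sum.cong refl)
    fix \<omega> assume "\<omega> \<in> set_pmf M"
    note pos = prob_atom_pos[OF this]
    show "pmf M \<omega> * log b (prob_atom M ?XYZ \<omega> / (prob_atom M ?XZ \<omega> * (prob_atom M ?YZ \<omega> / prob_atom M Z \<omega>)))
      = pmf M \<omega> * log b (prob_atom M ?XYZ \<omega>) + pmf M \<omega> * log b (prob_atom M Z \<omega>)
        - pmf M \<omega> * log b (prob_atom M ?XZ \<omega>) - pmf M \<omega> * log b (prob_atom M ?YZ \<omega>)"
      using b pos[of ?XYZ] pos[of ?XZ] pos[of ?YZ] pos[of Z]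
      by (simp add: log_divide log_mult algebra_simps)
  qed
  also have "\<dots> = ent b M ?XZ + ent b M ?YZ - ent b M ?XYZ - ent b M Z"
    unfolding ent_eq_sum_prob_atom[OF fin] by (simp add: sum_subtractf sum.distrib)
  finally show ?thesis by simp
qed

lemma ent_submodular_determined:
  assumes fin: "finite (set_pmf M)" and b: "b > 1"
    and AB_C: "determines M (\<lambda>\<omega>. (A \<omega>, B \<omega>)) C" and C_A: "determines M C A" and C_B: "determines M C B"
    and A_D: "determines M A D" and B_D: "determines M B D"
  shows "ent b M C + ent b M D \<le> ent b M A + ent b M B"
proof -
  have "ent b M (\<lambda>\<omega>. (A \<omega>, B \<omega>, D \<omega>)) + ent b M D
      \<le> ent b M (\<lambda>\<omega>. (A \<omega>, D \<omega>)) + ent b M (\<lambda>\<omega>. (B \<omega>, D \<omega>))"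
    by (rule ent_submodular[OF fin b])
  moreover have "ent b M (\<lambda>\<omega>. (A \<omega>, B \<omega>, D \<omega>)) = ent b M C"
  proof (rule ent_cong[OF fin])
    show "determines M (\<lambda>\<omega>. (A \<omega>, B \<omega>, D \<omega>)) C"
      by (rule determines_trans[OF _ AB_C]) (simp add: determines_def)
    show "determines M C (\<lambda>\<omega>. (A \<omega>, B \<omega>, D \<omega>))"
      by (intro determines_pair C_A C_B determines_trans[OF C_A A_D])
  qed
  moreover have "ent b M (\<lambda>\<omega>. (A \<omega>, D \<omega>)) = ent b M A"
    by (rule ent_cong[OF fin]) (simp_all add: determines_pair determines_refl A_D, simp add: determines_def)
  moreover have "ent b M (\<lambda>\<omega>. (B \<omega>, D \<omega>)) = ent b M B"
    by (rule ent_cong[OF fin]) (simp_all add: determines_pair determines_refl B_D, simp add: determines_def)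
  ultimately show ?thesis by simp
qed

lemma ent_mono:
  assumes fin: "finite (set_pmf M)" and b: "b > 1" and "determines M A D"
  shows "ent b M D \<le> ent b M A"
  using ent_submodular_determined[OF fin b _ determines_refl determines_refl assms(3) assms(3)]
  by (simp add: determines_def)

lemma ent_subadditive:
  assumes fin: "finite (set_pmf M)" and b: "b > 1"
  shows "ent b M (\<lambda>\<omega>. (A \<omega>, B \<omega>)) \<le> ent b M A + ent b M B"
  using ent_submodular_determined[OF fin b, of A B "\<lambda>\<omega>. (A \<omega>, B \<omega>)" "\<lambda>_. ()"]
    ent_const[OF fin, of b "()"]
  by (simp add: determines_def)

lemma cond_ent_antimono:
  assumes fin: "finite (set_pmf M)" and b: "b > 1" and "determines M Y' Y"
  shows "cond_ent b M X Y' \<le> cond_ent b M X Y"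
proof -
  have "ent b M (\<lambda>\<omega>. (X \<omega>, Y' \<omega>)) + ent b M Y \<le> ent b M (\<lambda>\<omega>. (X \<omega>, Y \<omega>)) + ent b M Y'"
  proof (rule ent_submodular_determined[OF fin b])
    show "determines M (\<lambda>\<omega>. ((X \<omega>, Y \<omega>), Y' \<omega>)) (\<lambda>\<omega>. (X \<omega>, Y' \<omega>))"
      by (simp add: determines_def)
    show "determines M (\<lambda>\<omega>. (X \<omega>, Y' \<omega>)) (\<lambda>\<omega>. (X \<omega>, Y \<omega>))"
      by (intro determines_pair determines_trans[OF _ assms(3)]) (simp_all add: determines_def)
    show "determines M (\<lambda>\<omega>. (X \<omega>, Y' \<omega>)) Y'" "determines M (\<lambda>\<omega>. (X \<omega>, Y \<omega>)) Y"
      by (simp_all add: determines_def)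
  qed (fact assms(3))
  then show ?thesis unfolding cond_ent_def by simp
qed

lemma cond_ent_le_of_determines:
  assumes fin: "finite (set_pmf M)" and b: "b > 1"
    and "determines M (\<lambda>\<omega>. (Z \<omega>, Y \<omega>)) X"
  shows "cond_ent b M X Y \<le> cond_ent b M Z Y"
proof -
  have "determines M (\<lambda>\<omega>. (Z \<omega>, Y \<omega>)) (\<lambda>\<omega>. (X \<omega>, Y \<omega>))"
    by (intro determines_pair assms(3)) (simp add: determines_def)
  then show ?thesis unfolding cond_ent_def using ent_mono[OF fin b] by simp
qed

lemma cond_ent_le_ent_add:
  assumes fin: "finite (set_pmf M)" and b: "b > 1"
  shows "cond_ent b M X Y \<le> ent b M U + cond_ent b M X (\<lambda>\<omega>. (Y \<omega>, U \<omega>))"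
proof -
  have "ent b M (\<lambda>\<omega>. (X \<omega>, Y \<omega>)) \<le> ent b M (\<lambda>\<omega>. (X \<omega>, Y \<omega>, U \<omega>))"
    by (rule ent_mono[OF fin b]) (simp add: determines_def)
  moreover have "ent b M (\<lambda>\<omega>. (Y \<omega>, U \<omega>)) \<le> ent b M Y + ent b M U"
    by (rule ent_subadditive[OF fin b])
  ultimately show ?thesis unfolding cond_ent_def by simp
qed

lemma mut_inf_eq_ent_minus_cond_ent: "mut_inf b M X Y = ent b M X - cond_ent b M X Y"
  unfolding mut_inf_def cond_ent_def by simp

lemma mut_inf_mono:
  assumes fin: "finite (set_pmf M)" and b: "b > 1"
    and X'_X: "determines M X' X" and Y'_Y: "determines M Y' Y"
  shows "mut_inf b M X Y \<le> mut_inf b M X' Y'"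
proof -
  have "ent b M (\<lambda>\<omega>. (X' \<omega>, Y \<omega>)) + ent b M X \<le> ent b M X' + ent b M (\<lambda>\<omega>. (X \<omega>, Y \<omega>))"
  proof (rule ent_submodular_determined[OF fin b _ _ _ X'_X])
    show "determines M (\<lambda>\<omega>. (X' \<omega>, Y \<omega>)) (\<lambda>\<omega>. (X \<omega>, Y \<omega>))"
      by (intro determines_pair determines_trans[OF _ X'_X]) (simp_all add: determines_def)
  qed (simp_all add: determines_def)
  moreover have "ent b M (\<lambda>\<omega>. (X' \<omega>, Y' \<omega>)) + ent b M Y \<le> ent b M Y' + ent b M (\<lambda>\<omega>. (X' \<omega>, Y \<omega>))"
  proof (rule ent_submodular_determined[OF fin b _ _ _ Y'_Y])
    show "determines M (\<lambda>\<omega>. (X' \<omega>, Y' \<omega>)) (\<lambda>\<omega>. (X' \<omega>, Y \<omega>))"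
      by (intro determines_pair determines_trans[OF _ Y'_Y]) (simp_all add: determines_def)
  qed (simp_all add: determines_def)
  ultimately show ?thesis unfolding mut_inf_def by simp
qed

lemma mut_inf_pair_le:
  assumes fin: "finite (set_pmf M)" and b: "b > 1"
  shows "mut_inf b M (\<lambda>\<omega>. (A \<omega>, B \<omega>)) C \<le> mut_inf b M B C + mut_inf b M A (\<lambda>\<omega>. (C \<omega>, B \<omega>))"
proof -
  have "ent b M (\<lambda>\<omega>. ((A \<omega>, B \<omega>), C \<omega>)) = ent b M (\<lambda>\<omega>. (A \<omega>, C \<omega>, B \<omega>))"
    by (rule ent_cong[OF fin]) (simp_all add: determines_def)
  moreover have "ent b M (\<lambda>\<omega>. (B \<omega>, C \<omega>)) = ent b M (\<lambda>\<omega>. (C \<omega>, B \<omega>))"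
    by (rule ent_cong[OF fin]) (simp_all add: determines_def)
  ultimately show ?thesis unfolding mut_inf_def using ent_subadditive[OF fin b, of A B] by simp
qed

lemma sum_pmf_log_nonpos:
  assumes fin: "finite (set_pmf M)" and b: "b > 1"
    and pos: "\<And>\<omega>. \<omega> \<in> set_pmf M \<Longrightarrow> h \<omega> > 0"
    and le1: "(\<Sum>\<omega>\<in>set_pmf M. pmf M \<omega> * h \<omega>) \<le> 1"
  shows "(\<Sum>\<omega>\<in>set_pmf M. pmf M \<omega> * log b (h \<omega>)) \<le> 0"
proof -
  have log_le: "log b x \<le> (x - 1) / ln b" if "x > 0" for x
    using b that unfolding log_def by (simp add: divide_right_mono ln_le_minus_one)
  have "(\<Sum>\<omega>\<in>set_pmf M. pmf M \<omega> * log b (h \<omega>)) \<le> (\<Sum>\<omega>\<in>set_pmf M. pmf M \<omega> * ((h \<omega> - 1) / ln b))"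
    by (intro sum_mono mult_left_mono log_le pos) auto
  also have "\<dots> = ((\<Sum>\<omega>\<in>set_pmf M. pmf M \<omega> * h \<omega>) - (\<Sum>\<omega>\<in>set_pmf M. pmf M \<omega>)) / ln b"
    by (simp add: sum_divide_distrib[symmetric] sum_subtractf algebra_simps)
  also have "\<dots> \<le> 0"
    using le1 fin b by (intro divide_nonpos_pos) (simp_all add: sum_pmf_eq_1)
  finally show ?thesis .
qed

lemma sum_pmf_inverse_cond_prob_le_1:
  assumes fin: "finite (set_pmf M)" and b: "b > 1"
    and card_le: "\<And>\<omega>. \<omega> \<in> set_pmf M \<Longrightarrow>
      real (card {X \<omega>' | \<omega>'. \<omega>' \<in> set_pmf M \<and> Y \<omega>' = Y \<omega>}) \<le> b powr c (Y \<omega>)"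
  shows "(\<Sum>\<omega>\<in>set_pmf M. pmf M \<omega> *
    (prob_atom M Y \<omega> / (prob_atom M (\<lambda>\<omega>. (X \<omega>, Y \<omega>)) \<omega> * b powr c (Y \<omega>)))) \<le> 1"
proof -
  let ?T = "\<lambda>\<omega>. (X \<omega>, Y \<omega>)"
  let ?\<Omega> = "set_pmf M"
  let ?P = "\<lambda>V v. measure_pmf.prob M (V -` {v})"
  let ?g = "\<lambda>t. ?P Y (snd t) / (?P ?T t * b powr c (snd t))"
  have "(\<Sum>\<omega>\<in>?\<Omega>. pmf M \<omega> * (prob_atom M Y \<omega> / (prob_atom M ?T \<omega> * b powr c (Y \<omega>))))
      = (\<Sum>\<omega>\<in>?\<Omega>. pmf M \<omega> * ?g (?T \<omega>))"
    by (simp add: prob_atom_def vimage_def)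
  also have "\<dots> = (\<Sum>t\<in>?T ` ?\<Omega>. ?P ?T t * ?g t)"
    by (rule sum_pmf_group_by_value[OF fin, symmetric])
  also have "\<dots> = (\<Sum>t\<in>?T ` ?\<Omega>. ?P Y (snd t) / b powr c (snd t))"
  proof (intro sum.cong refl)
    fix t assume "t \<in> ?T ` ?\<Omega>"
    then obtain \<omega> where "\<omega> \<in> ?\<Omega>" "t = ?T \<omega>" by auto
    then have "?P ?T t > 0" by (intro measure_pmf_posI) auto
    then show "?P ?T t * ?g t = ?P Y (snd t) / b powr c (snd t)" by simp
  qed
  also have "\<dots> = (\<Sum>y\<in>Y ` ?\<Omega>. \<Sum>t\<in>{t\<in>?T ` ?\<Omega>. snd t = y}. ?P Y (snd t) / b powr c (snd t))"
    by (rule sum.group[symmetric]) (use fin in auto)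
  also have "\<dots> = (\<Sum>y\<in>Y ` ?\<Omega>. real (card {t\<in>?T ` ?\<Omega>. snd t = y}) * (?P Y y / b powr c y))"
    by (intro sum.cong refl) simp
  also have "\<dots> \<le> (\<Sum>y\<in>Y ` ?\<Omega>. ?P Y y * 1)"
  proof (intro sum_mono)
    fix y assume "y \<in> Y ` ?\<Omega>"
    then obtain \<omega> where w: "\<omega> \<in> ?\<Omega>" "y = Y \<omega>" by auto
    have "{t\<in>?T ` ?\<Omega>. snd t = y} = (\<lambda>x. (x, y)) ` {X \<omega>' | \<omega>'. \<omega>' \<in> ?\<Omega> \<and> Y \<omega>' = Y \<omega>}"
      using w by (auto intro!: image_eqI)
    then have "card {t\<in>?T ` ?\<Omega>. snd t = y} = card {X \<omega>' | \<omega>'. \<omega>' \<in> ?\<Omega> \<and> Y \<omega>' = Y \<omega>}"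
      by (simp add: card_image inj_on_def)
    then have "real (card {t\<in>?T ` ?\<Omega>. snd t = y}) \<le> b powr c y"
      using card_le[OF w(1)] w(2) by simp
    then have "real (card {t\<in>?T ` ?\<Omega>. snd t = y}) * (?P Y y / b powr c y)
        \<le> b powr c y * (?P Y y / b powr c y)"
      by (rule mult_right_mono) simp
    then show "real (card {t\<in>?T ` ?\<Omega>. snd t = y}) * (?P Y y / b powr c y) \<le> ?P Y y * 1"
      using b by simp
  qed
  also have "\<dots> = (\<Sum>\<omega>\<in>?\<Omega>. pmf M \<omega> * 1)"
    by (rule sum_pmf_group_by_value[OF fin])
  also have "\<dots> = 1"
    using fin by (simp add: sum_pmf_eq_1)
  finally show ?thesis .
qed

lemma cond_ent_le_log_fibre_card:
  assumes fin: "finite (set_pmf M)" and b: "b > 1"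
    and card_le: "\<And>\<omega>. \<omega> \<in> set_pmf M \<Longrightarrow>
      real (card {X \<omega>' | \<omega>'. \<omega>' \<in> set_pmf M \<and> Y \<omega>' = Y \<omega>}) \<le> b powr c (Y \<omega>)"
  shows "cond_ent b M X Y \<le> (\<Sum>\<omega>\<in>set_pmf M. pmf M \<omega> * c (Y \<omega>))"
proof -
  let ?T = "\<lambda>\<omega>. (X \<omega>, Y \<omega>)"
  define h where "h \<omega> = prob_atom M Y \<omega> / (prob_atom M ?T \<omega> * b powr c (Y \<omega>))" for \<omega>
  have "pmf M \<omega> * log b (h \<omega>) = pmf M \<omega> * log b (prob_atom M Y \<omega>)
      - pmf M \<omega> * log b (prob_atom M ?T \<omega>) - pmf M \<omega> * c (Y \<omega>)" if "\<omega> \<in> set_pmf M" for \<omega>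
    using prob_atom_pos[OF that, of Y] prob_atom_pos[OF that, of ?T] b unfolding h_def
    by (simp add: log_divide log_mult log_powr ring_distribs)
  then have "cond_ent b M X Y - (\<Sum>\<omega>\<in>set_pmf M. pmf M \<omega> * c (Y \<omega>))
      = (\<Sum>\<omega>\<in>set_pmf M. pmf M \<omega> * log b (h \<omega>))"
    unfolding cond_ent_def ent_eq_sum_prob_atom[OF fin] by (simp add: sum_subtractf)
  moreover have "(\<Sum>\<omega>\<in>set_pmf M. pmf M \<omega> * log b (h \<omega>)) \<le> 0"
  proof (rule sum_pmf_log_nonpos[OF fin b])
    show "h \<omega> > 0" if "\<omega> \<in> set_pmf M" for \<omega>
      using prob_atom_pos[OF that, of Y] prob_atom_pos[OF that, of ?T] b unfolding h_def
      by (intro divide_pos_pos mult_pos_pos) auto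
    show "(\<Sum>\<omega>\<in>set_pmf M. pmf M \<omega> * h \<omega>) \<le> 1"
      unfolding h_def by (rule sum_pmf_inverse_cond_prob_le_1[OF fin b card_le])
  qed
  ultimately show ?thesis by simp
qed

lemma determines_of_cond_ent_eq_0:
  assumes fin: "finite (set_pmf M)" and b: "b > 1" and zero: "cond_ent b M X Y = 0"
  shows "determines M Y X"
proof (rule determinesI)
  fix \<omega> \<omega>' assume w: "\<omega> \<in> set_pmf M" and w': "\<omega>' \<in> set_pmf M" and eq: "Y \<omega> = Y \<omega>'"
  let ?T = "\<lambda>\<omega>. (X \<omega>, Y \<omega>)"
  let ?d = "\<lambda>v. pmf M v * (log b (prob_atom M Y v) - log b (prob_atom M ?T v))"
  have nonneg: "?d v \<ge> 0" if "v \<in> set_pmf M" for v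
  proof -
    have "prob_atom M ?T v \<le> prob_atom M Y v"
      unfolding prob_atom_def by (rule measure_pmf.finite_measure_mono) auto
    then show ?thesis using prob_atom_pos[OF that, of ?T] b by (intro mult_nonneg_nonneg) auto
  qed
  have "(\<Sum>v\<in>set_pmf M. ?d v) = cond_ent b M X Y"
    unfolding cond_ent_def ent_eq_sum_prob_atom[OF fin] by (simp add: sum_subtractf right_diff_distrib)
  then have "?d \<omega> = 0"
    using zero sum_nonneg_eq_0_iff[OF fin, of ?d] nonneg w by auto
  then have "log b (prob_atom M Y \<omega>) = log b (prob_atom M ?T \<omega>)"
    using w by (simp add: set_pmf_iff)
  then have same_prob: "prob_atom M Y \<omega> = prob_atom M ?T \<omega>"
    using prob_atom_pos[OF w, of Y] prob_atom_pos[OF w, of ?T] b by (auto intro: inj_onD[OF log_inj])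
  show "X \<omega> = X \<omega>'"
  proof (rule ccontr)
    assume "X \<omega> \<noteq> X \<omega>'"
    then have "measure_pmf.prob M ({v. Y v = Y \<omega>} - {v. ?T v = ?T \<omega>}) > 0"
      using w' eq by (intro measure_pmf_posI[OF w']) auto
    also have "measure_pmf.prob M ({v. Y v = Y \<omega>} - {v. ?T v = ?T \<omega>})
        = prob_atom M Y \<omega> - prob_atom M ?T \<omega>"
      unfolding prob_atom_def by (rule measure_pmf.finite_measure_Diff) auto
    finally show False using same_prob by simp
  qed
qed

lemma determines_imp_factor:
  assumes "determines M Y c"
  obtains g where "\<And>\<omega>. \<omega> \<in> set_pmf M \<Longrightarrow> c \<omega> = g (Y \<omega>)"
proof
  fix \<omega> assume w: "\<omega> \<in> set_pmf M"
  let ?v = "SOME v. v \<in> set_pmf M \<and> Y v = Y \<omega>"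
  have "?v \<in> set_pmf M \<and> Y ?v = Y \<omega>" by (rule someI[of _ \<omega>]) (use w in simp)
  then show "c \<omega> = c (SOME v. v \<in> set_pmf M \<and> Y v = Y \<omega>)"
    using determinesD[OF assms] w by metis
qed

lemma cond_ent_le_of_independent_source:
  assumes fin: "finite (set_pmf M)" and b: "b > 1"
    and G_Z: "determines M G Z"
    and source: "determines M (\<lambda>\<omega>. (V \<omega>, Z \<omega>, U \<omega>)) (\<lambda>\<omega>. (X \<omega>, Y \<omega>))"
    and indep: "mut_inf b M V (\<lambda>\<omega>. (G \<omega>, U \<omega>)) \<le> 0"
  shows "cond_ent b M X (\<lambda>\<omega>. ((Z \<omega>, Y \<omega>), U \<omega>))
    \<le> cond_ent b M X (\<lambda>\<omega>. (G \<omega>, (Z \<omega>, Y \<omega>), U \<omega>))"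
proof -
  have V_XY: "determines M (\<lambda>\<omega>. (V \<omega>, Z \<omega>, U \<omega>)) (\<lambda>\<omega>. (V \<omega>, X \<omega>, Z \<omega>, Y \<omega>, U \<omega>))"
  proof (rule determinesI)
    fix \<omega> \<omega>' assume w: "\<omega> \<in> set_pmf M" "\<omega>' \<in> set_pmf M"
      and e: "(V \<omega>, Z \<omega>, U \<omega>) = (V \<omega>', Z \<omega>', U \<omega>')"
    then show "(V \<omega>, X \<omega>, Z \<omega>, Y \<omega>, U \<omega>) = (V \<omega>', X \<omega>', Z \<omega>', Y \<omega>', U \<omega>')"
      using determinesD[OF source w e] by simp
  qed
  have G_Z': "determines M (\<lambda>\<omega>. (G \<omega>, U \<omega>)) (\<lambda>\<omega>. (G \<omega>, Z \<omega>, U \<omega>))"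
    by (intro determines_pair determines_trans[OF _ G_Z]) (simp_all add: determines_def)
  have G_VXY: "determines M (\<lambda>\<omega>. (G \<omega>, V \<omega>, U \<omega>)) (\<lambda>\<omega>. (G \<omega>, V \<omega>, X \<omega>, Z \<omega>, Y \<omega>, U \<omega>))"
  proof (rule determinesI)
    fix \<omega> \<omega>' assume w: "\<omega> \<in> set_pmf M" "\<omega>' \<in> set_pmf M"
      and e: "(G \<omega>, V \<omega>, U \<omega>) = (G \<omega>', V \<omega>', U \<omega>')"
    then have "(G \<omega>, Z \<omega>, U \<omega>) = (G \<omega>', Z \<omega>', U \<omega>')"
      using determinesD[OF G_Z' w] by simp
    then show "(G \<omega>, V \<omega>, X \<omega>, Z \<omega>, Y \<omega>, U \<omega>) = (G \<omega>', V \<omega>', X \<omega>', Z \<omega>', Y \<omega>', U \<omega>')"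
      using determinesD[OF V_XY w] e by simp
  qed
  let ?e = "ent b M"
  \<comment> \<open>I(X; G | Z, Y, U) \<le> I(V; G | Z, U) \<le> I(V; G, U) \<le> 0, written out in entropies\<close>
  have "?e (\<lambda>\<omega>. (G \<omega>, (Z \<omega>, Y \<omega>), U \<omega>)) + ?e (\<lambda>\<omega>. (Z \<omega>, U \<omega>))
      \<le> ?e (\<lambda>\<omega>. (G \<omega>, Z \<omega>, U \<omega>)) + ?e (\<lambda>\<omega>. ((Z \<omega>, Y \<omega>), U \<omega>))"
    by (rule ent_submodular_determined[OF fin b]) (simp_all add: determines_def)
  moreover have "?e (\<lambda>\<omega>. (G \<omega>, V \<omega>, X \<omega>, Z \<omega>, Y \<omega>, U \<omega>)) + ?e (\<lambda>\<omega>. (X \<omega>, (Z \<omega>, Y \<omega>), U \<omega>))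
      \<le> ?e (\<lambda>\<omega>. (X \<omega>, G \<omega>, (Z \<omega>, Y \<omega>), U \<omega>)) + ?e (\<lambda>\<omega>. (V \<omega>, X \<omega>, Z \<omega>, Y \<omega>, U \<omega>))"
    by (rule ent_submodular_determined[OF fin b]) (simp_all add: determines_def)
  moreover have "?e (\<lambda>\<omega>. (G \<omega>, V \<omega>, X \<omega>, Z \<omega>, Y \<omega>, U \<omega>)) = ?e (\<lambda>\<omega>. (G \<omega>, V \<omega>, U \<omega>))"
    by (rule ent_cong[OF fin _ G_VXY]) (simp add: determines_def)
  moreover have "?e (\<lambda>\<omega>. (V \<omega>, X \<omega>, Z \<omega>, Y \<omega>, U \<omega>)) = ?e (\<lambda>\<omega>. (V \<omega>, Z \<omega>, U \<omega>))"
    by (rule ent_cong[OF fin _ V_XY]) (simp add: determines_def)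
  moreover have "?e (\<lambda>\<omega>. (G \<omega>, Z \<omega>, U \<omega>)) = ?e (\<lambda>\<omega>. (G \<omega>, U \<omega>))"
    by (rule ent_cong[OF fin _ G_Z']) (simp add: determines_def)
  moreover have "?e (\<lambda>\<omega>. (V \<omega>, Z \<omega>, U \<omega>)) + ?e U \<le> ?e (\<lambda>\<omega>. (V \<omega>, U \<omega>)) + ?e (\<lambda>\<omega>. (Z \<omega>, U \<omega>))"
    by (rule ent_submodular_determined[OF fin b]) (simp_all add: determines_def)
  moreover have "?e (\<lambda>\<omega>. (V \<omega>, U \<omega>)) \<le> ?e V + ?e U"
    by (rule ent_subadditive[OF fin b])
  moreover have "?e (\<lambda>\<omega>. (V \<omega>, G \<omega>, U \<omega>)) = ?e (\<lambda>\<omega>. (G \<omega>, V \<omega>, U \<omega>))"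
    by (rule ent_cong[OF fin]) (simp_all add: determines_def)
  ultimately show ?thesis using indep unfolding cond_ent_def mut_inf_def by linarith
qed

lemma ent_le_of_card_range:
  assumes fin: "finite (set_pmf M)" and b: "b > 1"
    and card_le: "real (card (X ` set_pmf M)) \<le> b powr c"
  shows "ent b M X \<le> c"
proof -
  have "cond_ent b M X (\<lambda>_. ()) \<le> (\<Sum>\<omega>\<in>set_pmf M. pmf M \<omega> * c)"
  proof (rule cond_ent_le_log_fibre_card[OF fin b])
    have "{X \<omega>' | \<omega>'. \<omega>' \<in> set_pmf M \<and> () = ()} = X ` set_pmf M" by auto
    then show "real (card {X \<omega>' | \<omega>'. \<omega>' \<in> set_pmf M \<and> () = ()}) \<le> b powr c" for \<omega>
      using card_le by simp
  qed
  moreover have "ent b M (\<lambda>\<omega>. (X \<omega>, ())) = ent b M X"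
    by (rule ent_cong[OF fin]) (simp_all add: determines_def)
  ultimately show ?thesis
    using fin by (simp add: cond_ent_def ent_const sum_distrib_right[symmetric] sum_pmf_eq_1)
qed

lemma ent_eq_of_constant_pmf:
  assumes fin: "finite (set_pmf M)"
    and const: "\<And>x. x \<in> set_pmf (map_pmf X M) \<Longrightarrow> pmf (map_pmf X M) x = p"
  shows "ent b M X = - log b p"
proof -
  have "ent b M X = - (log b p * (\<Sum>x\<in>set_pmf (map_pmf X M). pmf (map_pmf X M) x))"
    unfolding ent_def using const by (simp add: sum_distrib_left mult.commute cong: sum.cong)
  also have "(\<Sum>x\<in>set_pmf (map_pmf X M). pmf (map_pmf X M) x) = 1"
    using fin by (simp add: sum_pmf_eq_1)
  finally show ?thesis by simp
qed

section \<open>Uniform messages and bounded answers\<close>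

lemma one_less_card_field: "1 < CARD('q::{finite,field})"
proof -
  have "card {0::'q, 1} \<le> CARD('q)" by (rule card_mono) auto
  then show ?thesis by simp
qed

lemma card_subset_PiE_lists:
  assumes "finite I" and G: "G \<subseteq> PiE I (\<lambda>j. {xs :: 'q::finite list. length xs = l j})"
  shows "real (card G) \<le> real CARD('q) powr (\<Sum>j\<in>I. real (l j))"
proof -
  have "finite (PiE I (\<lambda>j. {xs :: 'q list. length xs = l j}))"
    using assms(1) finite_lists_length_eq[of "UNIV :: 'q set"] by (intro finite_PiE) auto
  then have "card G \<le> card (PiE I (\<lambda>j. {xs :: 'q list. length xs = l j}))"
    by (rule card_mono[OF _ G])
  also have "\<dots> = (\<Prod>j\<in>I. CARD('q) ^ l j)"
    using assms(1) card_lists_length_eq[of "UNIV :: 'q set"] by (simp add: card_PiE)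
  also have "\<dots> = CARD('q) ^ (\<Sum>j\<in>I. l j)"
    by (simp add: power_sum)
  finally have "real (card G) \<le> real CARD('q) ^ (\<Sum>j\<in>I. l j)"
    by (metis of_nat_le_iff of_nat_power)
  also have "\<dots> = real CARD('q) powr (\<Sum>j\<in>I. real (l j))"
    by (simp add: powr_realpow[symmetric])
  finally show ?thesis .
qed

lemma cond_ent_answers_le_expected_length:
  fixes A :: "nat \<Rightarrow> 'w \<Rightarrow> 'q::finite list"
  assumes fin: "finite (set_pmf M)" and q: "1 < CARD('q)" and I: "finite I"
    and lengths: "\<And>j. j \<in> I \<Longrightarrow> determines M Y (\<lambda>\<omega>. length (A j \<omega>))"
  shows "cond_ent (real CARD('q)) M (\<lambda>\<omega>. restrict (\<lambda>j. A j \<omega>) I) Y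
    \<le> (\<Sum>\<omega>\<in>set_pmf M. pmf M \<omega> * (\<Sum>j\<in>I. real (length (A j \<omega>))))"
proof -
  have "determines M Y (\<lambda>\<omega>. \<Sum>j\<in>I. real (length (A j \<omega>)))"
  proof (rule determinesI)
    fix \<omega> \<omega>' assume e: "\<omega> \<in> set_pmf M" "\<omega>' \<in> set_pmf M" "Y \<omega> = Y \<omega>'"
    have "length (A j \<omega>) = length (A j \<omega>')" if "j \<in> I" for j
      using determinesD[OF lengths[OF that] e] .
    then show "(\<Sum>j\<in>I. real (length (A j \<omega>))) = (\<Sum>j\<in>I. real (length (A j \<omega>')))"
      by simp
  qed
  then obtain g where g: "\<And>\<omega>. \<omega> \<in> set_pmf M \<Longrightarrow> (\<Sum>j\<in>I. real (length (A j \<omega>))) = g (Y \<omega>)"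
    using determines_imp_factor by blast
  have "cond_ent (real CARD('q)) M (\<lambda>\<omega>. restrict (\<lambda>j. A j \<omega>) I) Y \<le> (\<Sum>\<omega>\<in>set_pmf M. pmf M \<omega> * g (Y \<omega>))"
  proof (rule cond_ent_le_log_fibre_card[OF fin])
    fix \<omega> assume w: "\<omega> \<in> set_pmf M"
    have "{restrict (\<lambda>j. A j \<omega>') I | \<omega>'. \<omega>' \<in> set_pmf M \<and> Y \<omega>' = Y \<omega>}
        \<subseteq> PiE I (\<lambda>j. {xs :: 'q list. length xs = length (A j \<omega>)})"
    proof clarify
      fix \<omega>' assume w': "\<omega>' \<in> set_pmf M" and "Y \<omega>' = Y \<omega>"
      then have "length (A j \<omega>') = length (A j \<omega>)" if "j \<in> I" for j
        using determinesD[OF lengths[OF that] w' w] by simp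
      then show "restrict (\<lambda>j. A j \<omega>') I \<in> PiE I (\<lambda>j. {xs :: 'q list. length xs = length (A j \<omega>)})"
        by (subst restrict_PiE_iff) auto
    qed
    from card_subset_PiE_lists[OF I this]
    show "real (card {restrict (\<lambda>j. A j \<omega>') I | \<omega>'. \<omega>' \<in> set_pmf M \<and> Y \<omega>' = Y \<omega>})
        \<le> real CARD('q) powr g (Y \<omega>)"
      using g[OF w] by simp
  qed (use q in simp)
  also have "\<dots> = (\<Sum>\<omega>\<in>set_pmf M. pmf M \<omega> * (\<Sum>j\<in>I. real (length (A j \<omega>))))"
    using g by (intro sum.cong) auto
  finally show ?thesis .
qed

lemma ent_W_all:
  fixes W :: "nat \<Rightarrow> 'w \<Rightarrow> 'q::{finite,field} list"
  assumes fin: "finite (set_pmf M)"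
    and msg_len: "\<forall>\<omega>\<in>set_pmf M. \<forall>j\<in>{1..K}. length (W j \<omega>) = L"
    and msg_unif: "\<forall>w. (\<forall>j\<in>{1..K}. length (w j) = L) \<longrightarrow>
        measure_pmf.prob M {\<omega>. \<forall>j\<in>{1..K}. W j \<omega> = w j} = 1 / real CARD('q) ^ (K * L)"
  shows "ent (real CARD('q)) M (W_all K W) = real (K * L)"
proof -
  have "ent (real CARD('q)) M (W_all K W) = - log (real CARD('q)) (1 / real CARD('q) ^ (K * L))"
  proof (rule ent_eq_of_constant_pmf[OF fin])
    fix x assume "x \<in> set_pmf (map_pmf (W_all K W) M)"
    then obtain \<omega> where w: "\<omega> \<in> set_pmf M" "x = W_all K W \<omega>" by auto
    have "W_all K W -` {x} = {\<omega>'. \<forall>j\<in>{1..K}. W j \<omega>' = x j}"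
      using w(2) by (auto simp: W_all_def restrict_eq_iff)
    moreover have "\<forall>j\<in>{1..K}. length (x j) = L" using w msg_len by (simp add: W_all_def)
    ultimately show "pmf (map_pmf (W_all K W) M) x = 1 / real CARD('q) ^ (K * L)"
      using msg_unif by (simp add: pmf_map)
  qed
  also have "\<dots> = real (K * L)"
    using one_less_card_field[where 'q='q] by (simp add: log_divide log_nat_power)
  finally show ?thesis .
qed

lemma ent_message_ge:
  fixes W :: "nat \<Rightarrow> 'w \<Rightarrow> 'q::{finite,field} list"
  assumes fin: "finite (set_pmf M)"
    and msg_len: "\<forall>\<omega>\<in>set_pmf M. \<forall>j\<in>{1..K}. length (W j \<omega>) = L"
    and msg_unif: "\<forall>w. (\<forall>j\<in>{1..K}. length (w j) = L) \<longrightarrow>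
        measure_pmf.prob M {\<omega>. \<forall>j\<in>{1..K}. W j \<omega> = w j} = 1 / real CARD('q) ^ (K * L)"
    and k: "k \<in> {1..K}"
  shows "real L \<le> ent (real CARD('q)) M (W k)"
proof -
  let ?b = "real CARD('q)"
  have b: "?b > 1" using one_less_card_field[where 'q='q] by simp
  have "ent ?b M (W_all K W) \<le> ent ?b M (\<lambda>\<omega>. (W k \<omega>, W_bar K W k \<omega>))"
    by (rule ent_mono[OF fin b]) (auto simp: determines_def W_all_def W_bar_def restrict_eq_iff)
  also have "\<dots> \<le> ent ?b M (W k) + ent ?b M (W_bar K W k)"
    by (rule ent_subadditive[OF fin b])
  also have "ent ?b M (W_bar K W k) \<le> (\<Sum>j\<in>{1..K} - {k}. real L)"
  proof (rule ent_le_of_card_range[OF fin b])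
    have "W_bar K W k ` set_pmf M \<subseteq> PiE ({1..K} - {k}) (\<lambda>j. {xs :: 'q list. length xs = L})"
    proof clarify
      fix \<omega> assume "\<omega> \<in> set_pmf M"
      then show "W_bar K W k \<omega> \<in> PiE ({1..K} - {k}) (\<lambda>j. {xs :: 'q list. length xs = L})"
        unfolding W_bar_def using msg_len by (subst restrict_PiE_iff) auto
    qed
    from card_subset_PiE_lists[OF _ this]
    show "real (card (W_bar K W k ` set_pmf M)) \<le> ?b powr (\<Sum>j\<in>{1..K} - {k}. real L)"
      by simp
  qed
  finally have "real (K * L) \<le> ent ?b M (W k) + real (K - 1) * real L"
    using ent_W_all[OF fin msg_len msg_unif] k by (simp add: card_Diff_singleton)
  moreover have "real (K * L) = real L + real (K - 1) * real L"
    using k by (simp add: algebra_simps of_nat_diff)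
  ultimately show ?thesis by linarith
qed

section \<open>Consequences of the validity conditions\<close>

lemma valid_scheme_determines_queries:
  assumes fin: "finite (set_pmf M)" and b: "b > 1"
    and "valid_scheme b M N K W RS Cc m F Q A" "k \<in> {1..K}" "admissible Cc m S"
  shows "determines M F (all_db N (Q k S))"
  using assms(3-5) unfolding valid_scheme_def by (intro determines_of_cond_ent_eq_0[OF fin b]) blast

lemma valid_scheme_determines_answer:
  assumes fin: "finite (set_pmf M)" and b: "b > 1"
    and "valid_scheme b M N K W RS Cc m F Q A" "k \<in> {1..K}" "admissible Cc m S" "n \<in> {1..N}"
  shows "determines M (\<lambda>\<omega>. (Q k S n \<omega>, W_all K W \<omega>, rand_part RS Cc \<omega>)) (A k S n)"
  using assms(3-6) unfolding valid_scheme_def by (intro determines_of_cond_ent_eq_0[OF fin b]) blast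

lemma valid_scheme_decodable:
  assumes fin: "finite (set_pmf M)" and b: "b > 1"
    and "valid_scheme b M N K W RS Cc m F Q A" "k \<in> {1..K}" "admissible Cc m S"
  shows "determines M (\<lambda>\<omega>. (F \<omega>, all_db N (A k S) \<omega>, rand_part RS S \<omega>)) (W k)"
  using assms(3-5) unfolding valid_scheme_def by (intro determines_of_cond_ent_eq_0[OF fin b]) blast

lemma valid_scheme_source_independent:
  assumes fin: "finite (set_pmf M)" and b: "b > 1"
    and valid: "valid_scheme b M N K W RS Cc m F Q A" and k: "k \<in> {1..K}" and S: "admissible Cc m S"
  shows "mut_inf b M (\<lambda>\<omega>. (W_all K W \<omega>, rand_part RS (Cc - S) \<omega>)) (\<lambda>\<omega>. (F \<omega>, rand_part RS S \<omega>)) \<le> 0"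
proof -
  have "mut_inf b M (rand_part RS (Cc - S)) (\<lambda>\<omega>. (F \<omega>, rand_part RS S \<omega>))
      \<le> mut_inf b M (rand_part RS (Cc - S)) (\<lambda>\<omega>. (F \<omega>, all_db N (A k S) \<omega>, W k \<omega>, rand_part RS S \<omega>))"
    by (rule mut_inf_mono[OF fin b determines_refl]) (simp add: determines_def)
  moreover have "mut_inf b M (W_all K W) (\<lambda>\<omega>. ((F \<omega>, rand_part RS S \<omega>), rand_part RS (Cc - S) \<omega>))
      \<le> mut_inf b M (W_all K W) (\<lambda>\<omega>. (F \<omega>, rand_part RS Cc \<omega>, rand_part RS S \<omega>))"
    by (rule mut_inf_mono[OF fin b determines_refl])
      (simp add: determines_def rand_part_def restrict_eq_iff)
  ultimately show ?thesis
    using mut_inf_pair_le[OF fin b, of "W_all K W" "rand_part RS (Cc - S)" "\<lambda>\<omega>. (F \<omega>, rand_part RS S \<omega>)"]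
      valid k S unfolding valid_scheme_def by fastforce
qed

lemma valid_scheme_private:
  assumes fin: "finite (set_pmf M)" and b: "b > 1"
    and valid: "valid_scheme b M N K W RS Cc m F Q A"
    and k: "k \<in> {1..K}" and k': "k' \<in> {1..K}" "k' \<noteq> k" and S: "admissible Cc m S" and n: "n \<in> {1..N}"
  shows "mut_inf b M (W k) (\<lambda>\<omega>. (Q k S n \<omega>, A k S n \<omega>)) \<le> 0"
proof -
  \<comment> \<open>by (C6) database n sees the same as when some other message W_k' is wanted, and then
    W_k is among the messages protected by (C7)\<close>
  obtain S' where S': "admissible Cc m S'"
    and same_view: "map_pmf (\<lambda>\<omega>. (Q k S n \<omega>, A k S n \<omega>, W_all K W \<omega>, rand_part RS Cc \<omega>)) M =
        map_pmf (\<lambda>\<omega>. (Q k' S' n \<omega>, A k' S' n \<omega>, W_all K W \<omega>, rand_part RS Cc \<omega>)) M"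
    using valid k k'(1) S n unfolding valid_scheme_def by blast
  have "mut_inf b M (W k) (\<lambda>\<omega>. (Q k S n \<omega>, A k S n \<omega>))
      = mut_inf b M (W k) (\<lambda>\<omega>. (Q k' S' n \<omega>, A k' S' n \<omega>))"
    using ent_map_pmf_cong[OF same_view, of b "\<lambda>(q, a, w, r). (q, a)"]
      ent_map_pmf_cong[OF same_view, of b "\<lambda>(q, a, w, r). (w k, q, a)"] k
    unfolding mut_inf_def by (simp add: W_all_def)
  also have "\<dots> \<le> mut_inf b M (W_bar K W k') (\<lambda>\<omega>. (F \<omega>, all_db N (A k' S') \<omega>, rand_part RS S' \<omega>))"
  proof (rule mut_inf_mono[OF fin b])
    show "determines M (W_bar K W k') (W k)"
      using k k'(2) by (auto simp: determines_def W_bar_def restrict_eq_iff)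
    have F_Q: "determines M F (all_db N (Q k' S'))"
      by (rule valid_scheme_determines_queries[OF fin b valid k'(1) S'])
    show "determines M (\<lambda>\<omega>. (F \<omega>, all_db N (A k' S') \<omega>, rand_part RS S' \<omega>))
        (\<lambda>\<omega>. (Q k' S' n \<omega>, A k' S' n \<omega>))"
    proof (rule determinesI)
      fix \<omega> \<omega>' assume w: "\<omega> \<in> set_pmf M" "\<omega>' \<in> set_pmf M"
        and e: "(F \<omega>, all_db N (A k' S') \<omega>, rand_part RS S' \<omega>) = (F \<omega>', all_db N (A k' S') \<omega>', rand_part RS S' \<omega>')"
      then have "all_db N (Q k' S') \<omega> = all_db N (Q k' S') \<omega>'"
        using determinesD[OF F_Q w] by simp
      then show "(Q k' S' n \<omega>, A k' S' n \<omega>) = (Q k' S' n \<omega>', A k' S' n \<omega>')"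
        using e n by (simp add: all_db_def restrict_eq_iff)
    qed
  qed
  also have "\<dots> = 0"
    using valid k'(1) S' unfolding valid_scheme_def by blast
  finally show ?thesis .
qed

section \<open>The download bound\<close>

lemma per_database_bound:
  fixes W :: "nat \<Rightarrow> 'w \<Rightarrow> 'q::{finite,field} list"
    and A :: "nat \<Rightarrow> 'c set \<Rightarrow> nat \<Rightarrow> 'w \<Rightarrow> 'q list"
  assumes fin: "finite (set_pmf M)"
    and msg_len: "\<forall>\<omega>\<in>set_pmf M. \<forall>j\<in>{1..K}. length (W j \<omega>) = L"
    and msg_unif: "\<forall>w. (\<forall>j\<in>{1..K}. length (w j) = L) \<longrightarrow>
        measure_pmf.prob M {\<omega>. \<forall>j\<in>{1..K}. W j \<omega> = w j} = 1 / real CARD('q) ^ (K * L)"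
    and valid: "valid_scheme (real CARD('q)) M N K W RS Cc m F Q A"
    and k: "k \<in> {1..K}" and k': "k' \<in> {1..K}" "k' \<noteq> k" and S: "admissible Cc m S"
    and ans_len: "\<And>j. j \<in> {1..N} \<Longrightarrow> determines M (Q k S j) (\<lambda>\<omega>. length (A k S j \<omega>))"
    and n: "n \<in> {1..N}"
  shows "real L \<le> ent (real CARD('q)) M (rand_part RS S)
    + (\<Sum>\<omega>\<in>set_pmf M. pmf M \<omega> * (\<Sum>j\<in>{1..N} - {n}. real (length (A k S j \<omega>))))"
proof -
  let ?b = "real CARD('q)"
  let ?U = "rand_part RS S" and ?Qn = "Q k S n" and ?An = "A k S n" and ?Qa = "all_db N (Q k S)"
  let ?Am = "\<lambda>\<omega>. restrict (\<lambda>j. A k S j \<omega>) ({1..N} - {n})"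
  let ?V = "\<lambda>\<omega>. (W_all K W \<omega>, rand_part RS (Cc - S) \<omega>)"
  have b: "?b > 1" using one_less_card_field[where 'q='q] by simp
  have F_Qa: "determines M F ?Qa"
    by (rule valid_scheme_determines_queries[OF fin b valid k S])
  have Qa_Qj: "determines M ?Qa (Q k S j)" if "j \<in> {1..N}" for j
    using that by (auto simp: determines_def all_db_def restrict_eq_iff)
  have source: "determines M (\<lambda>\<omega>. (?V \<omega>, ?Qn \<omega>, ?U \<omega>)) (\<lambda>\<omega>. (W k \<omega>, ?An \<omega>))"
  proof (rule determinesI)
    fix \<omega> \<omega>' assume w: "\<omega> \<in> set_pmf M" "\<omega>' \<in> set_pmf M"
      and e: "(?V \<omega>, ?Qn \<omega>, ?U \<omega>) = (?V \<omega>', ?Qn \<omega>', ?U \<omega>')"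
    have "rand_part RS Cc \<omega> = rand_part RS Cc \<omega>'"
      using e S by (auto simp: admissible_def rand_part_def restrict_eq_iff)
    then have "?An \<omega> = ?An \<omega>'"
      using e determinesD[OF valid_scheme_determines_answer[OF fin b valid k S n] w] by simp
    moreover have "W k \<omega> = W k \<omega>'"
      using e k by (simp add: W_all_def restrict_eq_iff)
    ultimately show "(W k \<omega>, ?An \<omega>) = (W k \<omega>', ?An \<omega>')" by simp
  qed
  have decode: "determines M (\<lambda>\<omega>. (?Am \<omega>, F \<omega>, (?Qn \<omega>, ?An \<omega>), ?U \<omega>)) (W k)"
  proof (rule determines_trans[OF _ valid_scheme_decodable[OF fin b valid k S]])
    show "determines M (\<lambda>\<omega>. (?Am \<omega>, F \<omega>, (?Qn \<omega>, ?An \<omega>), ?U \<omega>))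
        (\<lambda>\<omega>. (F \<omega>, all_db N (A k S) \<omega>, ?U \<omega>))"
      using n by (auto simp: determines_def all_db_def restrict_eq_iff)
  qed
  have F_Qa': "determines M (\<lambda>\<omega>. (F \<omega>, (?Qn \<omega>, ?An \<omega>), ?U \<omega>)) ?Qa"
    by (rule determines_trans[OF _ F_Qa]) (simp add: determines_def)
  have "real L \<le> ent ?b M (W k)"
    by (rule ent_message_ge[OF fin msg_len msg_unif k])
  also have "\<dots> \<le> cond_ent ?b M (W k) (\<lambda>\<omega>. (?Qn \<omega>, ?An \<omega>))"
    using valid_scheme_private[OF fin b valid k k' S n] by (simp add: mut_inf_eq_ent_minus_cond_ent)
  also have "\<dots> \<le> ent ?b M ?U + cond_ent ?b M (W k) (\<lambda>\<omega>. ((?Qn \<omega>, ?An \<omega>), ?U \<omega>))"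
    by (rule cond_ent_le_ent_add[OF fin b])
  also have "cond_ent ?b M (W k) (\<lambda>\<omega>. ((?Qn \<omega>, ?An \<omega>), ?U \<omega>))
      \<le> cond_ent ?b M (W k) (\<lambda>\<omega>. (F \<omega>, (?Qn \<omega>, ?An \<omega>), ?U \<omega>))"
    by (rule cond_ent_le_of_independent_source[OF fin b determines_trans[OF F_Qa Qa_Qj[OF n]] source
          valid_scheme_source_independent[OF fin b valid k S]])
  also have "\<dots> \<le> cond_ent ?b M ?Am (\<lambda>\<omega>. (F \<omega>, (?Qn \<omega>, ?An \<omega>), ?U \<omega>))"
    by (rule cond_ent_le_of_determines[OF fin b decode])
  also have "\<dots> \<le> cond_ent ?b M ?Am ?Qa"
    by (rule cond_ent_antimono[OF fin b F_Qa'])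
  also have "\<dots> \<le> (\<Sum>\<omega>\<in>set_pmf M. pmf M \<omega> * (\<Sum>j\<in>{1..N} - {n}. real (length (A k S j \<omega>))))"
    using one_less_card_field[where 'q='q]
    by (intro cond_ent_answers_le_expected_length[OF fin] determines_trans[OF Qa_Qj ans_len]) auto
  finally show ?thesis by simp
qed

lemma sum_sum_Diff_singleton:
  fixes f :: "'a \<Rightarrow> 'b::comm_ring_1"
  assumes "finite I"
  shows "(\<Sum>n\<in>I. \<Sum>j\<in>I - {n}. f j) = (of_nat (card I) - 1) * sum f I"
proof -
  have "(\<Sum>n\<in>I. \<Sum>j\<in>I - {n}. f j) = (\<Sum>n\<in>I. sum f I - f n)"
    using assms by (intro sum.cong) (simp_all add: sum_diff1)
  then show ?thesis by (simp add: sum_subtractf algebra_simps)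
qed

lemma expected_download_bound:
  fixes W :: "nat \<Rightarrow> 'w \<Rightarrow> 'q::{finite,field} list"
    and A :: "nat \<Rightarrow> 'c set \<Rightarrow> nat \<Rightarrow> 'w \<Rightarrow> 'q list"
  assumes fin: "finite (set_pmf M)"
    and msg_len: "\<forall>\<omega>\<in>set_pmf M. \<forall>j\<in>{1..K}. length (W j \<omega>) = L"
    and msg_unif: "\<forall>w. (\<forall>j\<in>{1..K}. length (w j) = L) \<longrightarrow>
        measure_pmf.prob M {\<omega>. \<forall>j\<in>{1..K}. W j \<omega> = w j} = 1 / real CARD('q) ^ (K * L)"
    and valid: "valid_scheme (real CARD('q)) M N K W RS Cc m F Q A"
    and k: "k \<in> {1..K}" and k': "k' \<in> {1..K}" "k' \<noteq> k" and S: "admissible Cc m S"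
    and ans_len: "\<And>j. j \<in> {1..N} \<Longrightarrow> determines M (Q k S j) (\<lambda>\<omega>. length (A k S j \<omega>))"
  shows "real N * real L \<le> real N * ent (real CARD('q)) M (rand_part RS S)
    + (real N - 1) * (\<Sum>\<omega>\<in>set_pmf M. pmf M \<omega> * (\<Sum>j\<in>{1..N}. real (length (A k S j \<omega>))))"
proof -
  let ?H = "ent (real CARD('q)) M (rand_part RS S)"
  let ?len = "\<lambda>\<omega> j. real (length (A k S j \<omega>))"
  have "real N * real L = (\<Sum>n\<in>{1..N}. real L)" by simp
  also have "\<dots> \<le> (\<Sum>n\<in>{1..N}. ?H + (\<Sum>\<omega>\<in>set_pmf M. pmf M \<omega> * (\<Sum>j\<in>{1..N} - {n}. ?len \<omega> j)))"
    by (intro sum_mono per_database_bound[OF fin msg_len msg_unif valid k k' S ans_len])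
  also have "\<dots> = real N * ?H + (\<Sum>\<omega>\<in>set_pmf M. pmf M \<omega> * (\<Sum>n\<in>{1..N}. \<Sum>j\<in>{1..N} - {n}. ?len \<omega> j))"
    by (simp add: sum.distrib sum_distrib_left) (rule sum.swap)
  also have "\<dots> = real N * ?H + (real N - 1) * (\<Sum>\<omega>\<in>set_pmf M. pmf M \<omega> * (\<Sum>j\<in>{1..N}. ?len \<omega> j))"
    by (simp add: sum_sum_Diff_singleton sum_distrib_left algebra_simps)
  finally show ?thesis .
qed

lemma sum_lengths_le_Max:
  fixes A :: "nat \<Rightarrow> 'c set \<Rightarrow> nat \<Rightarrow> 'w \<Rightarrow> 'a list" and k K N :: nat
  assumes "finite (set_pmf M)" "finite Cc"
    and "k \<in> {1..K}" "admissible Cc m S" "\<omega> \<in> set_pmf M"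
  shows "(\<Sum>n=1..N. length (A k S n \<omega>)) \<le> Max {(\<Sum>n=1..N. length (A k S0 n \<omega>)) | k S0 \<omega>.
                    k \<in> {1..K} \<and> admissible Cc m S0 \<and> \<omega> \<in> set_pmf M}"
proof (rule Max_ge)
  have "{(\<Sum>n=1..N. length (A k S0 n \<omega>)) | k S0 \<omega>. k \<in> {1..K} \<and> admissible Cc m S0 \<and> \<omega> \<in> set_pmf M}
      \<subseteq> (\<lambda>(k, S0, \<omega>). \<Sum>n=1..N. length (A k S0 n \<omega>)) ` ({1..K} \<times> Pow Cc \<times> set_pmf M)"
  proof clarify
    fix k S0 \<omega> assume "k \<in> {1..K}" "admissible Cc m S0" "\<omega> \<in> set_pmf M"
    then show "(\<Sum>n=1..N. length (A k S0 n \<omega>))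
        \<in> (\<lambda>(k, S0, \<omega>). \<Sum>n=1..N. length (A k S0 n \<omega>)) ` ({1..K} \<times> Pow Cc \<times> set_pmf M)"
      by (intro image_eqI[where x = "(k, S0, \<omega>)"]) (auto simp: admissible_def)
  qed
  then show "finite {(\<Sum>n=1..N. length (A k S0 n \<omega>)) | k S0 \<omega>.
      k \<in> {1..K} \<and> admissible Cc m S0 \<and> \<omega> \<in> set_pmf M}"
    by (rule finite_subset) (use assms(1,2) in \<open>intro finite_imageI finite_cartesian_product, auto\<close>)
qed (use assms(3-5) in blast)

theorem lemma9:
  fixes M :: "'w pmf"
    and W :: "nat \<Rightarrow> 'w \<Rightarrow> 'q::{finite,field} list"
    and RS :: "'w \<Rightarrow> 'c \<Rightarrow> 'r" and Cc :: "'c set" and m :: nat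
    and F :: "'w \<Rightarrow> 'f"
    and Q :: "nat \<Rightarrow> 'c set \<Rightarrow> nat \<Rightarrow> 'w \<Rightarrow> 'qu"
    and A :: "nat \<Rightarrow> 'c set \<Rightarrow> nat \<Rightarrow> 'w \<Rightarrow> 'q list"
    and N K L :: nat
  assumes N: "N \<ge> 1" and K: "K \<ge> 2" and L: "L \<ge> 1"
    and fin: "finite (set_pmf M)" "finite Cc" "m \<le> card Cc"
    and msg_len: "\<forall>\<omega>\<in>set_pmf M. \<forall>j\<in>{1..K}. length (W j \<omega>) = L"
    and msg_unif: "\<forall>w. (\<forall>j\<in>{1..K}. length (w j) = L) \<longrightarrow>
        measure_pmf.prob M {\<omega>. \<forall>j\<in>{1..K}. W j \<omega> = w j} = 1 / real CARD('q) ^ (K * L)"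
    and ans_len: "\<forall>k\<in>{1..K}. \<forall>S. admissible Cc m S \<longrightarrow> (\<forall>n\<in>{1..N}.
        \<forall>\<omega>\<in>set_pmf M. \<forall>\<omega>'\<in>set_pmf M.
          Q k S n \<omega> = Q k S n \<omega>' \<longrightarrow> length (A k S n \<omega>) = length (A k S n \<omega>'))"
    and valid: "valid_scheme (real CARD('q)) M N K W RS Cc m F Q A"
  shows "\<forall>S. admissible Cc m S \<longrightarrow>
    (let D = Max {(\<Sum>n=1..N. length (A k S0 n \<omega>)) | k S0 \<omega>.
                    k \<in> {1..K} \<and> admissible Cc m S0 \<and> \<omega> \<in> set_pmf M};
         d = real D / real L;
         \<rho>U = ent (real CARD('q)) M (rand_part RS S) / real L
     in (real N - 1) / real N * d + \<rho>U \<ge> 1)"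
proof (intro allI impI)
  fix S assume S: "admissible Cc m S"
  define D where "D = Max {(\<Sum>n=1..N. length (A k S0 n \<omega>)) | k S0 \<omega>.
    k \<in> {1..K} \<and> admissible Cc m S0 \<and> \<omega> \<in> set_pmf M}"
  define H where "H = ent (real CARD('q)) M (rand_part RS S)"
  define E where "E = (\<Sum>\<omega>\<in>set_pmf M. pmf M \<omega> * (\<Sum>j\<in>{1..N}. real (length (A 1 S j \<omega>))))"
  have k: "1 \<in> {1..K}" "2 \<in> {1..K}" using K by auto
  have lengths: "determines M (Q 1 S j) (\<lambda>\<omega>. length (A 1 S j \<omega>))" if "j \<in> {1..N}" for j
    using ans_len k(1) S that unfolding determines_def by blast
  have download: "real N * real L \<le> real N * H + (real N - 1) * E"
    unfolding H_def E_def
    by (rule expected_download_bound[OF fin(1) msg_len msg_unif valid k(1) k(2) _ S lengths]) simp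
  have "E \<le> (\<Sum>\<omega>\<in>set_pmf M. pmf M \<omega> * real D)"
    unfolding E_def D_def using sum_lengths_le_Max[OF fin(1,2) k(1) S]
    by (intro sum_mono mult_left_mono) (simp_all flip: of_nat_sum)
  also have "\<dots> = real D"
    using fin(1) by (simp add: sum_distrib_right[symmetric] sum_pmf_eq_1)
  finally have "(real N - 1) * E \<le> (real N - 1) * real D"
    using N by (intro mult_left_mono) auto
  with download have "real N * real L \<le> real N * H + (real N - 1) * real D" by linarith
  then show "let D = Max {(\<Sum>n=1..N. length (A k S0 n \<omega>)) | k S0 \<omega>.
                    k \<in> {1..K} \<and> admissible Cc m S0 \<and> \<omega> \<in> set_pmf M};
         d = real D / real L;
         \<rho>U = ent (real CARD('q)) M (rand_part RS S) / real L
     in (real N - 1) / real N * d + \<rho>U \<ge> 1"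
    using N L unfolding D_def[symmetric] H_def[symmetric] Let_def
    by (simp add: field_simps)
qed

end
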